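(* Let $H(d,q)$ be the Hamming graph, with intersection numbers $c_i=i$ and $b_i=(d-i)(q-1)$ for $i=0,1,\ldots,d$. Let $A$ and $D$ be its adjacency matrix and distance matrix (same vertex ordering), and let $t=dq^{d-1}(q-1)$. Define $$p(x)=t\left\{ \prod_{i=1}^d\frac{x-b_{0}+qc_{i}}{qc_{i}}- \frac{1}{d(q-1)} \prod_{\substack{i=0\\ i\neq1}}^d \frac{x-b_{0}+qc_{i}}{q(c_{i}-1)}\right\}.$$ Then $D=p(A)$.
   Context: The Hamming graph $H(d,q)$ (with $d\ge 1$, $q\ge 2$) has as vertices all ordered $d$-tuples over a $q$-element set, two vertices being adjacent if and only if they differ in exactly one coordinate. The distance matrix of a connected graph has $(u,v)$ entry equal to the length of a shortest $u$–$v$ path. The intersection numbers of a distance regular graph: for vertices $x,y$ at distance $i$, $c_i$ (resp. $b_i$) is the number of neighbours of $y$ at distance $i-1$ (resp. $i+1$) from $x$. *)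

theory Defs
  imports "HOL-Computational_Algebra.Polynomial"
begin

text \<open>Square matrices with rows and columns indexed by a finite vertex set V
  are represented as functions V => V => real (the common vertex ordering is implicit).\<close>

definition adjacency_matrix :: "('v \<Rightarrow> 'v \<Rightarrow> bool) \<Rightarrow> 'v \<Rightarrow> 'v \<Rightarrow> real" where
  "adjacency_matrix E u v = (if E u v then 1 else 0)"

definition id_matrix :: "'v \<Rightarrow> 'v \<Rightarrow> real" where
  "id_matrix u v = (if u = v then 1 else 0)"

definition mat_mult :: "'v set \<Rightarrow> ('v \<Rightarrow> 'v \<Rightarrow> real) \<Rightarrow> ('v \<Rightarrow> 'v \<Rightarrow> real) \<Rightarrow> 'v \<Rightarrow> 'v \<Rightarrow> real" where
  "mat_mult V A B u v = (\<Sum>w\<in>V. A u w * B w v)"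

fun mat_pow :: "'v set \<Rightarrow> ('v \<Rightarrow> 'v \<Rightarrow> real) \<Rightarrow> nat \<Rightarrow> 'v \<Rightarrow> 'v \<Rightarrow> real" where
  "mat_pow V A 0 = id_matrix"
| "mat_pow V A (Suc k) = mat_mult V (mat_pow V A k) A"

definition poly_matrix :: "'v set \<Rightarrow> real poly \<Rightarrow> ('v \<Rightarrow> 'v \<Rightarrow> real) \<Rightarrow> 'v \<Rightarrow> 'v \<Rightarrow> real" where
  "poly_matrix V p A u v = (\<Sum>k\<le>degree p. coeff p k * mat_pow V A k u v)"

definition edge_rel :: "'v set \<Rightarrow> ('v \<Rightarrow> 'v \<Rightarrow> bool) \<Rightarrow> ('v \<times> 'v) set" where
  "edge_rel V E = {(x, y). x \<in> V \<and> y \<in> V \<and> E x y}"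

definition graph_dist :: "'v set \<Rightarrow> ('v \<Rightarrow> 'v \<Rightarrow> bool) \<Rightarrow> 'v \<Rightarrow> 'v \<Rightarrow> nat" where
  "graph_dist V E u v = (LEAST n. (u, v) \<in> (edge_rel V E) ^^ n)"

definition distance_matrix :: "'v set \<Rightarrow> ('v \<Rightarrow> 'v \<Rightarrow> bool) \<Rightarrow> 'v \<Rightarrow> 'v \<Rightarrow> real" where
  "distance_matrix V E u v = real (graph_dist V E u v)"

definition hamming_vertices :: "nat \<Rightarrow> nat \<Rightarrow> nat list set" where
  "hamming_vertices d q = {xs. length xs = d \<and> set xs \<subseteq> {0..<q}}"

definition hamming_adj :: "nat \<Rightarrow> nat list \<Rightarrow> nat list \<Rightarrow> bool" where
  "hamming_adj d xs ys = (card {i. i < d \<and> xs ! i \<noteq> ys ! i} = 1)"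

definition ham_c :: "nat \<Rightarrow> real" where
  "ham_c i = real i"

definition ham_b :: "nat \<Rightarrow> nat \<Rightarrow> nat \<Rightarrow> real" where
  "ham_b d q i = (real d - real i) * (real q - 1)"

definition hamming_p :: "nat \<Rightarrow> nat \<Rightarrow> real poly" where
  "hamming_p d q =
    (let t = real d * real q ^ (d - 1) * (real q - 1);
         b0 = ham_b d q 0
     in smult t
        ((\<Prod>i\<in>{1..d}. [: (- b0 + real q * ham_c i) / (real q * ham_c i),
                           1 / (real q * ham_c i) :])
         - smult (1 / (real d * (real q - 1)))
           (\<Prod>i\<in>{0..d} - {1}. [: (- b0 + real q * ham_c i) / (real q * (ham_c i - 1)),
                                 1 / (real q * (ham_c i - 1)) :])))"

end

theory Submission
  imports Defs
begin

(* Fix a vertex u and write g_m(h) for the binomial coefficient C(d - h, m - h).  The vector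
   w \<mapsto> g_m(dist(u, w)) satisfies g_m A = (qm - d) g_m + (m + 1) g_(m+1), so the row e_u of
   \<Prod>m<j. (A + d - qm) is j! g_j.  The polynomial p of the theorem equals
   (x - b_1) \<Prod>m<d-1. (x + d - qm) / (d - 1)!, and since g_(d-1)(h) = d - h and g_d = 1,
   (g_(d-1) A - b_1 g_(d-1))(w) = dist(u, w). *)

definition row_mult :: "'v set \<Rightarrow> ('v \<Rightarrow> real) \<Rightarrow> ('v \<Rightarrow> 'v \<Rightarrow> real) \<Rightarrow> 'v \<Rightarrow> real" where
  "row_mult V x A v = (\<Sum>w\<in>V. x w * A w v)"

text \<open>Row vectors are functions on V; \<^term>\<open>row_poly V x p A\<close> is the row vector x p(A).\<close>

definition row_poly :: "'v set \<Rightarrow> ('v \<Rightarrow> real) \<Rightarrow> real poly \<Rightarrow> ('v \<Rightarrow> 'v \<Rightarrow> real) \<Rightarrow> 'v \<Rightarrow> real" where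
  "row_poly V x p A v = (\<Sum>k\<le>degree p. coeff p k * ((\<lambda>y. row_mult V y A) ^^ k) x v)"

lemma mat_pow_eq_funpow_row_mult: "mat_pow V A k u = ((\<lambda>y. row_mult V y A) ^^ k) (id_matrix u)"
  by (induction k) (auto simp: mat_mult_def row_mult_def fun_eq_iff)

lemma poly_matrix_eq_row_poly: "poly_matrix V p A u v = row_poly V (id_matrix u) p A v"
  by (simp add: poly_matrix_def row_poly_def mat_pow_eq_funpow_row_mult)

lemma row_mult_cong: "(\<And>w. w \<in> V \<Longrightarrow> x w = y w) \<Longrightarrow> row_mult V x A v = row_mult V y A v"
  by (simp add: row_mult_def)

lemma row_mult_scale: "row_mult V (\<lambda>w. c * x w) A v = c * row_mult V x A v"
  by (simp add: row_mult_def sum_distrib_left mult.assoc)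

lemma row_mult_sum: "row_mult V (\<lambda>w. \<Sum>k\<in>K. c k * f k w) A v = (\<Sum>k\<in>K. c k * row_mult V (f k) A v)"
  unfolding row_mult_def by (simp add: sum_distrib_left sum_distrib_right mult.assoc sum.swap[of _ K])

lemma row_poly_eq_sum_atMost:
  assumes "degree p \<le> n"
  shows "row_poly V x p A v = (\<Sum>k\<le>n. coeff p k * ((\<lambda>y. row_mult V y A) ^^ k) x v)"
  unfolding row_poly_def by (rule sum.mono_neutral_left) (use assms in \<open>auto simp: coeff_eq_0\<close>)

lemma row_poly_0 [simp]: "row_poly V x 0 A v = 0"
  by (simp add: row_poly_def)

lemma row_poly_pCons: "row_poly V x (pCons a p) A v = a * x v + row_mult V (\<lambda>w. row_poly V x p A w) A v"
proof -
  have "row_poly V x (pCons a p) A v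
      = (\<Sum>k\<le>Suc (degree p). coeff (pCons a p) k * ((\<lambda>y. row_mult V y A) ^^ k) x v)"
    by (rule row_poly_eq_sum_atMost) (simp add: degree_pCons_le)
  also have "\<dots> = a * x v + (\<Sum>k\<le>degree p. coeff p k * row_mult V (((\<lambda>y. row_mult V y A) ^^ k) x) A v)"
    by (subst sum.atMost_Suc_shift) (simp del: sum.atMost_Suc)
  also have "\<dots> = a * x v + row_mult V (\<lambda>w. row_poly V x p A w) A v"
    by (simp add: row_poly_def row_mult_sum)
  finally show ?thesis .
qed

lemma row_poly_add: "row_poly V x (p + q) A v = row_poly V x p A v + row_poly V x q A v"
proof -
  let ?n = "max (degree p) (degree q)"
  have "row_poly V x (p + q) A v = (\<Sum>k\<le>?n. coeff (p + q) k * ((\<lambda>y. row_mult V y A) ^^ k) x v)"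
    by (rule row_poly_eq_sum_atMost) (rule degree_add_le_max)
  also have "\<dots> = (\<Sum>k\<le>?n. coeff p k * ((\<lambda>y. row_mult V y A) ^^ k) x v)
      + (\<Sum>k\<le>?n. coeff q k * ((\<lambda>y. row_mult V y A) ^^ k) x v)"
    by (simp add: sum.distrib algebra_simps)
  also have "\<dots> = row_poly V x p A v + row_poly V x q A v"
    by (simp add: row_poly_eq_sum_atMost[of p ?n] row_poly_eq_sum_atMost[of q ?n])
  finally show ?thesis .
qed

lemma row_poly_smult: "row_poly V x (smult c p) A v = c * row_poly V x p A v"
proof -
  have "row_poly V x (smult c p) A v = (\<Sum>k\<le>degree p. coeff (smult c p) k * ((\<lambda>y. row_mult V y A) ^^ k) x v)"
    by (rule row_poly_eq_sum_atMost) (rule degree_smult_le)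
  then show ?thesis
    by (simp add: row_poly_def sum_distrib_left mult.assoc)
qed

lemma row_poly_mult: "row_poly V x (p * q) A v = row_poly V (\<lambda>w. row_poly V x q A w) p A v"
proof (induction p arbitrary: v rule: pCons_induct)
  case (pCons a p)
  have "row_poly V x (pCons a p * q) A v
      = a * row_poly V x q A v + row_mult V (\<lambda>w. row_poly V x (p * q) A w) A v"
    by (simp add: row_poly_add row_poly_smult row_poly_pCons)
  also have "\<dots> = row_poly V (\<lambda>w. row_poly V x q A w) (pCons a p) A v"
    by (simp add: pCons.IH row_poly_pCons)
  finally show ?case .
qed simp

lemma row_poly_cong:
  assumes "\<And>w. w \<in> V \<Longrightarrow> x w = y w" and "v \<in> V"
  shows "row_poly V x p A v = row_poly V y p A v"
  using assms(2)
proof (induction p arbitrary: v rule: pCons_induct)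
  case (pCons a p)
  then show ?case
    using assms(1) row_mult_cong[of V "\<lambda>w. row_poly V x p A w" "\<lambda>w. row_poly V y p A w"]
    by (simp add: row_poly_pCons)
qed simp

lemma row_poly_scale: "row_poly V (\<lambda>w. c * x w) p A v = c * row_poly V x p A v"
proof (induction p arbitrary: v rule: pCons_induct)
  case (pCons a p)
  then show ?case
    by (simp add: row_poly_pCons row_mult_scale algebra_simps flip: row_mult_scale)
qed simp

lemma row_poly_1: "row_poly V x 1 A v = x v"
  by (simp add: one_pCons row_poly_pCons row_mult_def)

lemma row_poly_monic_linear: "row_poly V x [:a, 1:] A v = a * x v + row_mult V x A v"
proof -
  have "row_poly V x [:1:] A = x"
    by (simp add: fun_eq_iff row_poly_1 flip: one_pCons)
  then show ?thesis
    by (simp add: row_poly_pCons)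
qed

definition hamming_dist :: "nat \<Rightarrow> nat list \<Rightarrow> nat list \<Rightarrow> nat" where
  "hamming_dist d u v = card {i. i < d \<and> u ! i \<noteq> v ! i}"

lemma finite_hamming_vertices: "finite (hamming_vertices d q)"
  using finite_lists_length_eq[of "{0..<q}" d] by (simp add: hamming_vertices_def conj_commute)

lemma hamming_vertices_nth_less:
  assumes "u \<in> hamming_vertices d q" and "i < d"
  shows "u ! i < q"
proof -
  have "u ! i \<in> set u"
    using assms by (simp add: hamming_vertices_def)
  then show ?thesis
    using assms(1) by (auto simp: hamming_vertices_def)
qed

lemma list_update_in_hamming_vertices:
  assumes "u \<in> hamming_vertices d q" and "a < q"
  shows "u[i := a] \<in> hamming_vertices d q"
  using assms set_update_subset_insert[of u i a] by (auto simp: hamming_vertices_def)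

lemma hamming_dist_self [simp]: "hamming_dist d u u = 0"
  by (simp add: hamming_dist_def)

lemma hamming_dist_commute: "hamming_dist d u v = hamming_dist d v u"
  unfolding hamming_dist_def by (metis)

lemma hamming_dist_le: "hamming_dist d u v \<le> d"
  unfolding hamming_dist_def using card_mono[of "{..<d}" "{i. i < d \<and> u ! i \<noteq> v ! i}"] by auto

lemma hamming_dist_triangle: "hamming_dist d u w \<le> hamming_dist d u v + hamming_dist d v w"
proof -
  have "card {i. i < d \<and> u ! i \<noteq> w ! i}
      \<le> card ({i. i < d \<and> u ! i \<noteq> v ! i} \<union> {i. i < d \<and> v ! i \<noteq> w ! i})"
    by (rule card_mono) auto
  also have "\<dots> \<le> card {i. i < d \<and> u ! i \<noteq> v ! i} + card {i. i < d \<and> v ! i \<noteq> w ! i}"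
    by (rule card_Un_le)
  finally show ?thesis
    by (simp add: hamming_dist_def)
qed

lemma hamming_dist_eq_0_iff:
  assumes "u \<in> hamming_vertices d q" and "v \<in> hamming_vertices d q"
  shows "hamming_dist d u v = 0 \<longleftrightarrow> u = v"
  using assms by (auto simp: hamming_dist_def hamming_vertices_def intro!: nth_equalityI)

lemma hamming_dist_list_update:
  assumes "length v = d" and "i < d" and "a \<noteq> v ! i"
  shows "hamming_dist d u (v[i := a]) =
    (if u ! i = v ! i then hamming_dist d u v + 1
     else if u ! i = a then hamming_dist d u v - 1 else hamming_dist d u v)"
proof -
  let ?S = "{j. j < d \<and> u ! j \<noteq> v ! j}"
  have "{j. j < d \<and> u ! j \<noteq> v[i := a] ! j} =
      (if u ! i = v ! i then insert i ?S else if u ! i = a then ?S - {i} else ?S)"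
    using assms by (auto simp: nth_list_update)
  then show ?thesis
    using assms(2) by (simp add: hamming_dist_def)
qed

lemma hamming_adj_iff_dist: "hamming_adj d u v \<longleftrightarrow> hamming_dist d u v = 1"
  by (simp add: hamming_adj_def hamming_dist_def)

lemma hamming_walk_of_dist:
  assumes "u \<in> hamming_vertices d q" and "v \<in> hamming_vertices d q" and "hamming_dist d u v = n"
  shows "(u, v) \<in> edge_rel (hamming_vertices d q) (hamming_adj d) ^^ n"
  using assms
proof (induction n arbitrary: u)
  case 0
  then show ?case
    by (simp add: hamming_dist_eq_0_iff)
next
  case (Suc n)
  then obtain i where i: "i < d" "u ! i \<noteq> v ! i"
    by (metis (mono_tags, lifting) Collect_empty_eq card.empty hamming_dist_def nat.distinct(1))
  have len: "length u = d"
    using Suc.prems(1) by (simp add: hamming_vertices_def)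
  define u' where "u' = u[i := v ! i]"
  have u': "u' \<in> hamming_vertices d q"
    unfolding u'_def using Suc.prems(1,2) i(1) by (intro list_update_in_hamming_vertices hamming_vertices_nth_less)
  have "hamming_dist d u' v = n"
    using hamming_dist_list_update[OF len i(1), of "v ! i" v] i Suc.prems(3)
    by (simp add: u'_def hamming_dist_commute[of d _ v])
  then have "(u', v) \<in> edge_rel (hamming_vertices d q) (hamming_adj d) ^^ n"
    using Suc.IH[OF u' Suc.prems(2)] by simp
  moreover have "(u, u') \<in> edge_rel (hamming_vertices d q) (hamming_adj d)"
    using hamming_dist_list_update[OF len i(1), of "v ! i" u] i Suc.prems(1) u'
    by (simp add: edge_rel_def hamming_adj_iff_dist u'_def)
  ultimately show ?case
    by (rule relpow_Suc_I2[rotated])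
qed

lemma hamming_dist_le_walk_length:
  "(u, v) \<in> edge_rel V (hamming_adj d) ^^ n \<Longrightarrow> hamming_dist d u v \<le> n"
proof (induction n arbitrary: v)
  case (Suc n)
  then obtain w where "(u, w) \<in> edge_rel V (hamming_adj d) ^^ n" and "hamming_adj d w v"
    by (auto simp: edge_rel_def)
  then show ?case
    using Suc.IH hamming_dist_triangle[of d u v w] by (fastforce simp: hamming_adj_iff_dist)
qed (simp add: hamming_dist_def)

lemma graph_dist_hamming:
  assumes "u \<in> hamming_vertices d q" and "v \<in> hamming_vertices d q"
  shows "graph_dist (hamming_vertices d q) (hamming_adj d) u v = hamming_dist d u v"
  unfolding graph_dist_def
  by (rule Least_equality) (use assms hamming_walk_of_dist hamming_dist_le_walk_length in auto)

lemma hamming_neighbours: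
  assumes "v \<in> hamming_vertices d q"
  shows "{w \<in> hamming_vertices d q. hamming_adj d w v} =
    (\<lambda>(i, a). v[i := a]) ` (SIGMA i:{..<d}. {0..<q} - {v ! i})"
proof (intro equalityI subsetI)
  have len: "length v = d"
    using assms by (simp add: hamming_vertices_def)
  fix w
  assume "w \<in> {w \<in> hamming_vertices d q. hamming_adj d w v}"
  then have w: "w \<in> hamming_vertices d q" and "card {j. j < d \<and> w ! j \<noteq> v ! j} = 1"
    by (auto simp: hamming_adj_def)
  then obtain i where i: "{j. j < d \<and> w ! j \<noteq> v ! j} = {i}"
    by (metis card_1_singletonE)
  then have "i < d" and "w ! i \<noteq> v ! i"
    by auto
  moreover have "w = v[i := w ! i]"
  proof (rule nth_equalityI)
    have "\<forall>j<d. j \<noteq> i \<longrightarrow> w ! j = v ! j"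
      using i by blast
    then show "w ! j = v[i := w ! i] ! j" if "j < length w" for j
      using that w len \<open>i < d\<close> by (auto simp: hamming_vertices_def nth_list_update)
  qed (use w len in \<open>simp add: hamming_vertices_def\<close>)
  ultimately show "w \<in> (\<lambda>(i, a). v[i := a]) ` (SIGMA i:{..<d}. {0..<q} - {v ! i})"
    using hamming_vertices_nth_less[OF w] by (intro image_eqI[where x="(i, w ! i)"]) auto
next
  have len: "length v = d"
    using assms by (simp add: hamming_vertices_def)
  fix w
  assume "w \<in> (\<lambda>(i, a). v[i := a]) ` (SIGMA i:{..<d}. {0..<q} - {v ! i})"
  then obtain i a where "i < d" "a < q" "a \<noteq> v ! i" and w: "w = v[i := a]"
    by force
  then show "w \<in> {w \<in> hamming_vertices d q. hamming_adj d w v}"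
    using assms hamming_dist_list_update[OF len, of i a v]
    by (simp add: list_update_in_hamming_vertices hamming_adj_iff_dist hamming_dist_commute)
qed

lemma inj_on_list_update:
  assumes "length v = d"
  shows "inj_on (\<lambda>(i, a). v[i := a]) (SIGMA i:{..<d}. {0..<q} - {v ! i})"
  unfolding inj_on_def using assms by clarsimp (metis nth_list_update_eq nth_list_update_neq)

lemma row_mult_hamming_adj:
  assumes "v \<in> hamming_vertices d q"
  shows "row_mult (hamming_vertices d q) x (adjacency_matrix (hamming_adj d)) v
     = (\<Sum>i<d. \<Sum>a\<in>{0..<q} - {v ! i}. x (v[i := a]))"
proof -
  have len: "length v = d"
    using assms by (simp add: hamming_vertices_def)
  have "row_mult (hamming_vertices d q) x (adjacency_matrix (hamming_adj d)) v
      = (\<Sum>w\<in>{w \<in> hamming_vertices d q. hamming_adj d w v}. x w)"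
    by (simp add: row_mult_def adjacency_matrix_def sum.inter_filter finite_hamming_vertices
        if_distrib cong: if_cong)
  also have "\<dots> = (\<Sum>(i, a)\<in>(SIGMA i:{..<d}. {0..<q} - {v ! i}). x (v[i := a]))"
    unfolding hamming_neighbours[OF assms]
    by (subst sum.reindex[OF inj_on_list_update[OF len]]) (simp add: case_prod_unfold)
  also have "\<dots> = (\<Sum>i<d. \<Sum>a\<in>{0..<q} - {v ! i}. x (v[i := a]))"
    by (simp add: sum.Sigma)
  finally show ?thesis .
qed

lemma sum_radial_over_coordinate:
  assumes u: "u \<in> hamming_vertices d q" and v: "v \<in> hamming_vertices d q" and i: "i < d"
  defines "h \<equiv> hamming_dist d u v"
  shows "(\<Sum>a\<in>{0..<q} - {v ! i}. g (hamming_dist d u (v[i := a]))) =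
    (if u ! i = v ! i then (real q - 1) * g (h + 1) else g (h - 1) + (real q - 2) * g h)"
proof -
  have len: "length v = d"
    using v by (simp add: hamming_vertices_def)
  have ui: "u ! i < q" and vi: "v ! i < q"
    using u v i by (simp_all add: hamming_vertices_nth_less)
  show ?thesis
  proof (cases "u ! i = v ! i")
    case True
    then have "(\<Sum>a\<in>{0..<q} - {v ! i}. g (hamming_dist d u (v[i := a]))) = (\<Sum>a\<in>{0..<q} - {v ! i}. g (h + 1))"
      using hamming_dist_list_update[OF len i] by (intro sum.cong) (auto simp: h_def)
    with True vi show ?thesis
      by (simp add: of_nat_diff)
  next
    case False
    have split: "{0..<q} - {v ! i} = insert (u ! i) ({0..<q} - {v ! i, u ! i})"
      using ui False by auto
    have "(\<Sum>a\<in>{0..<q} - {v ! i, u ! i}. g (hamming_dist d u (v[i := a]))) = (\<Sum>a\<in>{0..<q} - {v ! i, u ! i}. g h)"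
      using hamming_dist_list_update[OF len i] False by (intro sum.cong) (auto simp: h_def)
    moreover have "card ({0..<q} - {v ! i, u ! i}) = q - 2"
      using ui vi False by (subst card_Diff_subset) auto
    ultimately show ?thesis
      using hamming_dist_list_update[OF len i, of "u ! i" u] False ui vi
      by (simp add: split h_def of_nat_diff)
  qed
qed

lemma row_mult_radial:
  assumes u: "u \<in> hamming_vertices d q" and v: "v \<in> hamming_vertices d q"
  defines "h \<equiv> hamming_dist d u v"
  shows "row_mult (hamming_vertices d q) (\<lambda>w. g (hamming_dist d u w)) (adjacency_matrix (hamming_adj d)) v
    = real (d - h) * (real q - 1) * g (h + 1) + real h * (g (h - 1) + (real q - 2) * g h)"
proof -
  let ?E = "{i. i < d \<and> u ! i = v ! i}" and ?N = "{i. i < d \<and> u ! i \<noteq> v ! i}"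
  have "?E = {..<d} - ?N"
    by auto
  then have cards: "card ?E = d - h" "card ?N = h"
    using card_Diff_subset[of ?N "{..<d}"] by (auto simp: h_def hamming_dist_def)
  have "row_mult (hamming_vertices d q) (\<lambda>w. g (hamming_dist d u w)) (adjacency_matrix (hamming_adj d)) v
     = (\<Sum>i<d. if u ! i = v ! i then (real q - 1) * g (h + 1) else g (h - 1) + (real q - 2) * g h)"
    unfolding row_mult_hamming_adj[OF v] h_def by (intro sum.cong) (simp_all add: sum_radial_over_coordinate[OF u v])
  also have "\<dots> = real (card ?E) * ((real q - 1) * g (h + 1)) + real (card ?N) * (g (h - 1) + (real q - 2) * g h)"
    by (simp add: sum.If_cases lessThan_def Collect_conj_eq[symmetric] Int_def)
  finally show ?thesis
    by (simp add: cards)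
qed

text \<open>\<^term>\<open>subcube_count d m h\<close> = C(d - h, m - h) counts the m-sets of coordinates that contain
  the h coordinates in which two words at distance h differ, i.e. the m-dimensional subcubes through
  both words.\<close>

definition subcube_count :: "nat \<Rightarrow> nat \<Rightarrow> nat \<Rightarrow> real" where
  "subcube_count d m h = (if h \<le> m then real ((d - h) choose (m - h)) else 0)"

lemma subcube_count_Suc_dist:
  assumes "h \<le> m"
  shows "real (d - h) * subcube_count d m (h + 1) = real (m - h) * subcube_count d m h"
proof (cases "h = m")
  case False
  then have "(d - h) * (d - h - 1 choose (m - h - 1)) = (m - h) * (d - h choose (m - h))"
    using binomial_absorption[of "m - h - 1" "d - h"] assms by (simp add: Suc_diff_Suc)
  then have "real (d - h) * real (d - h - 1 choose (m - h - 1)) = real (m - h) * real (d - h choose (m - h))"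
    by (metis of_nat_mult)
  with False assms show ?thesis
    unfolding subcube_count_def by (simp add: Suc_diff_Suc diff_diff_add)
qed (simp add: subcube_count_def)

lemma subcube_count_pred_dist:
  assumes "0 < h" and "h \<le> m" and "m < d"
  shows "subcube_count d m (h - 1) = subcube_count d m h + subcube_count d (m + 1) h"
proof -
  have "d - (h - 1) = Suc (d - h)" and "m - (h - 1) = Suc (m - h)"
    using assms by auto
  with assms show ?thesis
    unfolding subcube_count_def by (simp add: Suc_diff_le)
qed

lemma subcube_count_Suc:
  assumes "h \<le> m" and "m < d"
  shows "real (m + 1 - h) * subcube_count d (m + 1) h = real (d - m) * subcube_count d m h"
proof -
  have "(m - h + 1) * (d - h choose (m - h + 1)) = (d - m) * (d - h choose (m - h))"
    using binomial_absorption[of "m - h" "d - h"] binomial_absorb_comp[of "d - h" "m - h"] assms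
    by simp
  then have "real (m + 1 - h) * real (d - h choose (m + 1 - h)) = real (d - m) * real (d - h choose (m - h))"
    using assms by (metis Suc_diff_le Suc_eq_plus1 of_nat_mult)
  with assms show ?thesis
    unfolding subcube_count_def by simp
qed

lemma subcube_count_recurrence:
  fixes Q :: real
  assumes "h \<le> d" and "m < d"
  shows "real (d - h) * (Q - 1) * subcube_count d m (h + 1)
      + real h * (subcube_count d m (h - 1) + (Q - 2) * subcube_count d m h)
    = (Q * real m - real d) * subcube_count d m h + real (m + 1) * subcube_count d (m + 1) h"
proof (cases "h \<le> m")
  case True
  define g g' where "g = subcube_count d m h" and "g' = subcube_count d (m + 1) h"
  have "real h * subcube_count d m (h - 1) = real h * (g + g')"
    using subcube_count_pred_dist[OF _ True assms(2)] by (cases "h = 0") (simp_all add: g_def g'_def)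
  then have "real (d - h) * (Q - 1) * subcube_count d m (h + 1)
        + real h * (subcube_count d m (h - 1) + (Q - 2) * g)
      = (Q - 1) * (real (m - h) * g) + real h * (g + g') + real h * (Q - 2) * g"
    using subcube_count_Suc_dist[OF True, of d] by (simp add: g_def algebra_simps)
  also have "\<dots> = (Q * real m - real d) * g + real h * g' + real (d - m) * g"
    using True assms by (simp add: of_nat_diff algebra_simps)
  also have "\<dots> = (Q * real m - real d) * g + real h * g' + real (m + 1 - h) * g'"
    using subcube_count_Suc[OF True assms(2)] by (simp add: g_def g'_def)
  also have "\<dots> = (Q * real m - real d) * g + real (m + 1) * g'"
    using True by (simp add: of_nat_diff algebra_simps)
  finally show ?thesis
    by (simp add: g_def g'_def)
next
  case False
  then show ?thesis
    by (cases "h = m + 1") (auto simp: subcube_count_def)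
qed

lemma row_mult_subcube_count:
  assumes "u \<in> hamming_vertices d q" and "v \<in> hamming_vertices d q" and "m < d"
  shows "row_mult (hamming_vertices d q) (\<lambda>w. subcube_count d m (hamming_dist d u w))
      (adjacency_matrix (hamming_adj d)) v
    = (real q * real m - real d) * subcube_count d m (hamming_dist d u v)
      + real (m + 1) * subcube_count d (m + 1) (hamming_dist d u v)"
  unfolding row_mult_radial[OF assms(1,2)] by (rule subcube_count_recurrence[OF hamming_dist_le assms(3)])

definition subcube_poly :: "nat \<Rightarrow> nat \<Rightarrow> nat \<Rightarrow> real poly" where
  "subcube_poly d q j = (\<Prod>m<j. [: real d - real q * real m, 1 :])"

lemma row_poly_subcube_poly:
  assumes u: "u \<in> hamming_vertices d q" and v: "v \<in> hamming_vertices d q" and "j \<le> d"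
  shows "row_poly (hamming_vertices d q) (id_matrix u) (subcube_poly d q j) (adjacency_matrix (hamming_adj d)) v
    = fact j * subcube_count d j (hamming_dist d u v)"
  using v \<open>j \<le> d\<close>
proof (induction j arbitrary: v)
  case 0
  then show ?case
    using hamming_dist_eq_0_iff[OF u] by (simp add: subcube_poly_def row_poly_1 subcube_count_def id_matrix_def)
next
  case (Suc j)
  let ?V = "hamming_vertices d q" and ?A = "adjacency_matrix (hamming_adj d)"
  have "row_poly ?V (id_matrix u) (subcube_poly d q (Suc j)) ?A v
      = row_poly ?V (\<lambda>w. row_poly ?V (id_matrix u) (subcube_poly d q j) ?A w)
          [: real d - real q * real j, 1 :] ?A v"
    by (simp only: subcube_poly_def prod.lessThan_Suc mult.commute row_poly_mult)
  also have "\<dots> = row_poly ?V (\<lambda>w. fact j * subcube_count d j (hamming_dist d u w))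
          [: real d - real q * real j, 1 :] ?A v"
    using Suc by (intro row_poly_cong) simp_all
  also have "\<dots> = fact (Suc j) * subcube_count d (Suc j) (hamming_dist d u v)"
    using Suc.prems by (simp add: row_poly_monic_linear row_mult_scale row_mult_subcube_count[OF u] algebra_simps)
  finally show ?case .
qed

lemma row_poly_distance:
  assumes u: "u \<in> hamming_vertices d q" and v: "v \<in> hamming_vertices d q" and "d \<ge> 1"
  shows "row_poly (hamming_vertices d q) (\<lambda>w. subcube_count d (d - 1) (hamming_dist d u w))
      [: - ham_b d q 1, 1 :] (adjacency_matrix (hamming_adj d)) v = real (hamming_dist d u v)"
proof -
  let ?h = "hamming_dist d u v"
  have "subcube_count d (d - 1) ?h = real d - real ?h"
  proof (cases "?h = d")
    case False
    then have "d - ?h = Suc (d - Suc ?h)" and "?h \<le> d - 1"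
      using hamming_dist_le[of d u v] by auto
    then show ?thesis
      by (simp add: subcube_count_def of_nat_diff)
  qed (use \<open>d \<ge> 1\<close> in \<open>simp add: subcube_count_def\<close>)
  moreover have "subcube_count d d ?h = 1"
    using hamming_dist_le[of d u v] by (simp add: subcube_count_def)
  ultimately show ?thesis
    using assms row_mult_subcube_count[OF u v, of "d - 1"]
    by (simp add: row_poly_monic_linear ham_b_def of_nat_diff algebra_simps)
qed

lemma subcube_poly_eq_prod_atLeastAtMost:
  assumes "j \<le> d"
  shows "subcube_poly d q j = (\<Prod>i\<in>{d - j + 1..d}. [: real q * real i - ham_b d q 0, 1 :])"
  unfolding subcube_poly_def
proof (rule prod.reindex_bij_witness[where i="\<lambda>i. d - i" and j="\<lambda>m. d - m"])
  fix m
  assume "m \<in> {..<j}"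
  then show "[: real q * real (d - m) - ham_b d q 0, 1 :] = [: real d - real q * real m, 1 :]"
    using assms by (simp add: ham_b_def of_nat_diff algebra_simps)
qed (use assms in auto)

lemma prod_hamming_factors_eq_subcube_poly:
  assumes "j \<le> d"
  shows "(\<Prod>i\<in>{d - j + 1..d}. [: (- ham_b d q 0 + real q * ham_c i) / c i, 1 / c i :])
    = smult (\<Prod>i\<in>{d - j + 1..d}. 1 / c i) (subcube_poly d q j)"
proof -
  have "(\<Prod>i\<in>{d - j + 1..d}. [: (- ham_b d q 0 + real q * ham_c i) / c i, 1 / c i :])
      = (\<Prod>i\<in>{d - j + 1..d}. smult (1 / c i) [: real q * real i - ham_b d q 0, 1 :])"
    by (rule prod.cong) (simp_all add: ham_c_def divide_inverse algebra_simps)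
  then show ?thesis
    by (simp only: prod_smult subcube_poly_eq_prod_atLeastAtMost[OF assms])
qed

lemma prod_scaled_naturals: "(\<Prod>i\<in>{1..n}. Q * real i) = Q ^ n * fact n"
  by (simp add: prod.distrib fact_prod)

lemma hamming_p_first_product:
  "(\<Prod>i\<in>{1..d}. [: (- ham_b d q 0 + real q * ham_c i) / (real q * ham_c i), 1 / (real q * ham_c i) :])
    = smult (1 / (real q ^ d * fact d)) (subcube_poly d q d)"
proof -
  have "(\<Prod>i\<in>{1..d}. 1 / (real q * ham_c i)) = 1 / (real q ^ d * fact d)"
    by (simp only: ham_c_def prod_dividef prod_scaled_naturals prod.neutral_const)
  moreover have "{d - d + 1..d} = {1..d}"
    by simp
  ultimately show ?thesis
    using prod_hamming_factors_eq_subcube_poly[OF order_refl, of d q "\<lambda>i. real q * ham_c i"] by (simp only:)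
qed

lemma hamming_p_second_product:
  assumes d: "d = Suc n"
  shows "(\<Prod>i\<in>{0..d} - {1}. [: (- ham_b d q 0 + real q * ham_c i) / (real q * (ham_c i - 1)),
                                1 / (real q * (ham_c i - 1)) :])
    = [: ham_b d q 0 / real q, - 1 / real q :] * smult (1 / (real q ^ n * fact n)) (subcube_poly d q n)"
proof -
  have "{d - n + 1..d} = {Suc 1..Suc n}"
    using d by simp
  then have "(\<Prod>i\<in>{d - n + 1..d}. 1 / (real q * (ham_c i - 1))) = (\<Prod>i\<in>{1..n}. 1 / (real q * real i))"
    by (simp only: prod.shift_bounds_cl_Suc_ivl ham_c_def of_nat_Suc add_diff_cancel_left')
  also have "\<dots> = 1 / (real q ^ n * fact n)"
    by (simp only: prod_dividef prod_scaled_naturals prod.neutral_const)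
  finally have "(\<Prod>i\<in>{d - n + 1..d}. [: (- ham_b d q 0 + real q * ham_c i) / (real q * (ham_c i - 1)),
                                        1 / (real q * (ham_c i - 1)) :])
      = smult (1 / (real q ^ n * fact n)) (subcube_poly d q n)"
    using prod_hamming_factors_eq_subcube_poly[of n d q "\<lambda>i. real q * (ham_c i - 1)"] d by simp
  moreover have "[: (- ham_b d q 0 + real q * ham_c 0) / (real q * (ham_c 0 - 1)), 1 / (real q * (ham_c 0 - 1)) :]
      = [: ham_b d q 0 / real q, - 1 / real q :]"
    by (simp add: ham_c_def)
  moreover have "{0..d} - {1} = insert 0 {d - n + 1..d}" and "0 \<notin> {d - n + 1..d}"
    using d by auto
  ultimately show ?thesis
    by (simp only: prod.insert[OF finite_atLeastAtMost] not_False_eq_True)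
qed

lemma hamming_p_factored:
  assumes "d \<ge> 1" and "q \<ge> 2"
  shows "hamming_p d q = smult (1 / fact (d - 1)) ([: - ham_b d q 1, 1 :] * subcube_poly d q (d - 1))"
proof -
  obtain n where d: "d = Suc n"
    using assms(1) by (cases d) auto
  have q: "real q \<noteq> 0" "real q - 1 \<noteq> 0" "real d \<noteq> 0"
    using assms by auto
  have "fact d = real d * fact n" and "real q ^ d = real q * real q ^ n"
    by (simp_all add: d)
  then have first: "real d * real q ^ n * (real q - 1) * (1 / (real q ^ d * fact d)) = (real q - 1) / (real q * fact n)"
    and second: "real d * real q ^ n * (real q - 1) * (1 / (real d * (real q - 1)) * (1 / (real q ^ n * fact n)))
      = 1 / fact n"
    using q by simp_all
  have linear: "smult ((real q - 1) / (real q * fact n)) [: real d - real q * real n, 1 :]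
      - smult (1 / fact n) [: ham_b d q 0 / real q, - 1 / real q :] = smult (1 / fact n) [: - ham_b d q 1, 1 :]"
    using q by (simp add: d ham_b_def field_simps)
  have "d - 1 = n" and "subcube_poly d q d = [: real d - real q * real n, 1 :] * subcube_poly d q n"
    by (simp_all only: d diff_Suc_1 subcube_poly_def prod.lessThan_Suc mult.commute)
  then have "hamming_p d q = smult (real d * real q ^ n * (real q - 1))
        (smult (1 / (real q ^ d * fact d)) [: real d - real q * real n, 1 :]
         - smult (1 / (real d * (real q - 1))) (smult (1 / (real q ^ n * fact n)) [: ham_b d q 0 / real q, - 1 / real q :]))
      * subcube_poly d q n"
    unfolding hamming_p_def Let_def hamming_p_first_product hamming_p_second_product[OF d]
    by (simp only: mult_smult_left mult_smult_right left_diff_distrib)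
  also have "\<dots> = smult (1 / fact n) [: - ham_b d q 1, 1 :] * subcube_poly d q n"
    by (simp only: smult_diff_right smult_smult first second linear)
  finally show ?thesis
    using \<open>d - 1 = n\<close> by (simp only: mult_smult_left)
qed

theorem theorem3p2:
  fixes d q :: nat
  assumes "d \<ge> 1" and "q \<ge> 2"
  shows "\<forall>u\<in>hamming_vertices d q. \<forall>v\<in>hamming_vertices d q.
           distance_matrix (hamming_vertices d q) (hamming_adj d) u v =
           poly_matrix (hamming_vertices d q) (hamming_p d q)
             (adjacency_matrix (hamming_adj d)) u v"
proof (intro ballI)
  fix u v
  assume u: "u \<in> hamming_vertices d q" and v: "v \<in> hamming_vertices d q"
  let ?V = "hamming_vertices d q" and ?A = "adjacency_matrix (hamming_adj d)"
  have "poly_matrix ?V (hamming_p d q) ?A u v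
      = 1 / fact (d - 1) * row_poly ?V (\<lambda>w. row_poly ?V (id_matrix u) (subcube_poly d q (d - 1)) ?A w)
          [: - ham_b d q 1, 1 :] ?A v"
    by (simp only: poly_matrix_eq_row_poly hamming_p_factored[OF assms] row_poly_smult row_poly_mult)
  also have "\<dots> = 1 / fact (d - 1) * row_poly ?V (\<lambda>w. fact (d - 1) * subcube_count d (d - 1) (hamming_dist d u w))
          [: - ham_b d q 1, 1 :] ?A v"
    using row_poly_subcube_poly[OF u] v by (intro arg_cong[where f="\<lambda>r. _ * r"] row_poly_cong) auto
  also have "\<dots> = real (hamming_dist d u v)"
    by (simp only: row_poly_scale row_poly_distance[OF u v assms(1)]) simp
  finally show "distance_matrix ?V (hamming_adj d) u v = poly_matrix ?V (hamming_p d q) ?A u v"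
    by (simp add: distance_matrix_def graph_dist_hamming[OF u v])
qed

end
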